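(* Assume the setting below and suppose $\tau\le0$ and $|x_k^{(1)}|<a$. Let $q_k=\left\lceil\log_2\frac{(1+\tau)a}{|x_k^{(1)}|}\right\rceil$ (an integer which may be zero or negative). Then (with probability one) the step returned by the line search at iteration $k$ is $t_k=\min(1,1/2^{q_k-1})$.
   Context: Let $n\ge2$, $a\ge\sqrt{n-1}$, $f(x)=a|x^{(1)}|+\sum_{i=2}^n x^{(i)}$ on $\mathbb{R}^n$ ($x^{(i)}$ the $i$-th coordinate), $0<c_1<c_2<1$, and $\tau=c_1+\frac{(n-1)(c_1-1)}{a^2}$. The initial point $x_0$ is drawn from the normal distribution on $\mathbb{R}^n$ (independently of $a$), and $x_{k+1}=x_k+t_kd_k$, $d_k=-\nabla f(x_k)$, where $t_k$ is returned by the following Armijo–Wolfe bracketing line search: set $\alpha=0$, $\beta=+\infty$, $t=1$; repeat: if $A(t)$ fails set $\beta\leftarrow t$; else if $W(t)$ fails set $\alpha\leftarrow t$; else stop and return $t$; then if $\beta<+\infty$ set $t\leftarrow(\alpha+\beta)/2$, otherwise $t\leftarrow2\alpha$. Here $A(t)$: $f(x_k+td_k)\le f(x_k)+c_1t\nabla f(x_k)^Td_k$, and $W(t)$: $f$ is differentiable at $x_k+td_k$ and $\nabla f(x_k+td_k)^Td_k\ge c_2\nabla f(x_k)^Td_k$. All statements are understood to hold with probability one. *)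

theory Defs
  imports "HOL-Analysis.Analysis" "HOL-Probability.Probability"
begin

text \<open>The test function f(x) = a |x^(1)| + sum over the other coordinates, on real^'n;
  the distinguished index i1 plays the role of the first coordinate.\<close>
definition fnc :: "'n::finite \<Rightarrow> real \<Rightarrow> real^'n \<Rightarrow> real" where
  "fnc i1 a x = a * \<bar>x $ i1\<bar> + (\<Sum>i\<in>UNIV - {i1}. x $ i)"

definition grad :: "(real^'n \<Rightarrow> real) \<Rightarrow> real^'n \<Rightarrow> real^'n" where
  "grad f x = (\<chi> i. frechet_derivative f (at x) (axis i 1))"

definition armijo :: "(real^'n \<Rightarrow> real) \<Rightarrow> real \<Rightarrow> real^'n \<Rightarrow> real^'n \<Rightarrow> real \<Rightarrow> bool" where
  "armijo f c1 x d t \<longleftrightarrow> f (x + t *\<^sub>R d) \<le> f x + c1 * t * (grad f x \<bullet> d)"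

definition wolfe :: "(real^'n \<Rightarrow> real) \<Rightarrow> real \<Rightarrow> real^'n \<Rightarrow> real^'n \<Rightarrow> real \<Rightarrow> bool" where
  "wolfe f c2 x d t \<longleftrightarrow> f differentiable (at (x + t *\<^sub>R d)) \<and>
      grad f (x + t *\<^sub>R d) \<bullet> d \<ge> c2 * (grad f x \<bullet> d)"

text \<open>States (alpha, beta, t) of the bracketing line search; beta = None encodes +infinity.
  State j is the j-th trial step; the search stops at the first j whose trial t satisfies A and W.\<close>
fun ls_state :: "(real^'n \<Rightarrow> real) \<Rightarrow> real \<Rightarrow> real \<Rightarrow> real^'n \<Rightarrow> real^'n \<Rightarrow> nat
     \<Rightarrow> real \<times> real option \<times> real" where
  "ls_state f c1 c2 x d 0 = (0, None, 1)"
| "ls_state f c1 c2 x d (Suc j) =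
     (case ls_state f c1 c2 x d j of (\<alpha>, \<beta>, t) \<Rightarrow>
        (let (\<alpha>', \<beta>') = (if \<not> armijo f c1 x d t then (\<alpha>, Some t)
                          else if \<not> wolfe f c2 x d t then (t, \<beta>)
                          else (\<alpha>, \<beta>))
         in (\<alpha>', \<beta>', (case \<beta>' of Some b \<Rightarrow> (\<alpha>' + b) / 2 | None \<Rightarrow> 2 * \<alpha>'))))"

definition ls_trial :: "(real^'n \<Rightarrow> real) \<Rightarrow> real \<Rightarrow> real \<Rightarrow> real^'n \<Rightarrow> real^'n \<Rightarrow> nat \<Rightarrow> real" where
  "ls_trial f c1 c2 x d j = snd (snd (ls_state f c1 c2 x d j))"

definition ls_stops_at :: "(real^'n \<Rightarrow> real) \<Rightarrow> real \<Rightarrow> real \<Rightarrow> real^'n \<Rightarrow> real^'n \<Rightarrow> nat \<Rightarrow> bool" where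
  "ls_stops_at f c1 c2 x d j \<longleftrightarrow>
     armijo f c1 x d (ls_trial f c1 c2 x d j) \<and> wolfe f c2 x d (ls_trial f c1 c2 x d j)"

definition ls_terminates :: "(real^'n \<Rightarrow> real) \<Rightarrow> real \<Rightarrow> real \<Rightarrow> real^'n \<Rightarrow> real^'n \<Rightarrow> bool" where
  "ls_terminates f c1 c2 x d \<longleftrightarrow> (\<exists>j. ls_stops_at f c1 c2 x d j)"

text \<open>Returned step (meaningful only when the search terminates).\<close>
definition ls_step :: "(real^'n \<Rightarrow> real) \<Rightarrow> real \<Rightarrow> real \<Rightarrow> real^'n \<Rightarrow> real^'n \<Rightarrow> real" where
  "ls_step f c1 c2 x d = ls_trial f c1 c2 x d (LEAST j. ls_stops_at f c1 c2 x d j)"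

fun gd_iter :: "(real^'n \<Rightarrow> real) \<Rightarrow> real \<Rightarrow> real \<Rightarrow> real^'n \<Rightarrow> nat \<Rightarrow> real^'n" where
  "gd_iter f c1 c2 x0 0 = x0"
| "gd_iter f c1 c2 x0 (Suc k) =
     (let x = gd_iter f c1 c2 x0 k; d = - grad f x in x + ls_step f c1 c2 x d *\<^sub>R d)"

definition gd_step :: "(real^'n \<Rightarrow> real) \<Rightarrow> real \<Rightarrow> real \<Rightarrow> real^'n \<Rightarrow> nat \<Rightarrow> real" where
  "gd_step f c1 c2 x0 k =
     (let x = gd_iter f c1 c2 x0 k in ls_step f c1 c2 x (- grad f x))"

definition std_normal_vec :: "(real^'n) measure" where
  "std_normal_vec = density lborel (\<lambda>x. ennreal (\<Prod>i\<in>UNIV. std_normal_density (x $ i)))"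

end

theory Submission
  imports Defs
begin

text \<open>While the first coordinate u = |x^(1)| is nonzero, f is differentiable at x and
  a step t along -\<nabla>f(x) with t a > u overshoots the kink: then Wolfe holds automatically
  (the derivative along the ray has become a^2 - (n - 1) \<ge> 0) and Armijo holds iff
  t \<le> 2u / ((1 + \<tau>) a). The bracketing search, starting at t = 1, halves t until Armijo holds,
  and this happens first at t = 2^(1 - q). The condition u \<noteq> 0 is almost sure because
  every step returned by the search is rational, so x_k^(1) stays in x_0^(1) + a \<rat>.\<close>

lemma ls_state_halving:
  assumes "\<forall>i<j. \<not> armijo f c1 x d (1 / 2 ^ i)"
  shows "\<exists>\<beta>. ls_state f c1 c2 x d j = (0, \<beta>, 1 / 2 ^ j)"
  using assms
proof (induction j)
  case 0
  then show ?case by simp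
next
  case (Suc j)
  then obtain \<beta> where "ls_state f c1 c2 x d j = (0, \<beta>, 1 / 2 ^ j)" by auto
  moreover have "\<not> armijo f c1 x d (1 / 2 ^ j)" using Suc.prems by simp
  ultimately show ?case by simp
qed

lemma ls_trial_halving:
  assumes "\<forall>i<j. \<not> armijo f c1 x d (1 / 2 ^ i)"
  shows "ls_trial f c1 c2 x d j = 1 / 2 ^ j"
proof -
  obtain \<beta> where "ls_state f c1 c2 x d j = (0, \<beta>, 1 / 2 ^ j)"
    using ls_state_halving[OF assms] by blast
  then show ?thesis by (simp add: ls_trial_def)
qed

lemma ls_step_halving:
  assumes fail: "\<forall>j<N. \<not> armijo f c1 x d (1 / 2 ^ j)"
    and "armijo f c1 x d (1 / 2 ^ N)" and "wolfe f c2 x d (1 / 2 ^ N)"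
  shows "ls_terminates f c1 c2 x d \<and> ls_step f c1 c2 x d = 1 / 2 ^ N"
proof -
  have trial: "ls_trial f c1 c2 x d j = 1 / 2 ^ j" if "j \<le> N" for j
    using fail that by (intro ls_trial_halving) auto
  have stop: "ls_stops_at f c1 c2 x d N"
    using assms trial[of N] by (simp add: ls_stops_at_def)
  have "\<not> ls_stops_at f c1 c2 x d j" if "j < N" for j
    using fail that trial[of j] by (simp add: ls_stops_at_def)
  then have "(LEAST j. ls_stops_at f c1 c2 x d j) = N"
    using stop by (intro Least_equality) (auto simp: not_le[symmetric])
  then show ?thesis
    using stop trial[of N] by (auto simp: ls_terminates_def ls_step_def)
qed

lemma inverse_two_power_ceiling_log_le:
  assumes "0 < R"
  shows "1 / 2 ^ nat \<lceil>log 2 (1 / R)\<rceil> \<le> R"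
proof -
  have "log 2 (1 / R) \<le> real (nat \<lceil>log 2 (1 / R)\<rceil>)" by linarith
  then have "1 / R \<le> 2 ^ nat \<lceil>log 2 (1 / R)\<rceil>"
    using assms by (simp add: log_le_iff powr_realpow)
  then show ?thesis using assms by (simp add: field_simps)
qed

lemma less_inverse_two_power_below_ceiling_log:
  assumes "0 < R" and "j < nat \<lceil>log 2 (1 / R)\<rceil>"
  shows "R < 1 / 2 ^ j"
proof -
  have "int j < \<lceil>log 2 (1 / R)\<rceil>" using assms(2) by simp
  then have "real j < log 2 (1 / R)" by (simp add: less_ceiling_iff)
  then have "2 ^ j < 1 / R"
    using assms(1) by (simp add: less_log_iff powr_realpow)
  then show ?thesis using assms(1) by (simp add: field_simps)
qed

lemma min_one_inverse_two_powr_ceiling: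
  "min 1 (1 / 2 powr real_of_int \<lceil>y\<rceil>) = 1 / 2 ^ nat \<lceil>y\<rceil>"
proof (cases "\<lceil>y\<rceil> \<le> 0")
  case True
  then have "(2::real) powr real_of_int \<lceil>y\<rceil> \<le> 1"
    using powr_mono[of "real_of_int \<lceil>y\<rceil>" 0 2] by simp
  then show ?thesis using True by (simp add: field_simps)
next
  case False
  then have "(2::real) powr real_of_int \<lceil>y\<rceil> = 2 ^ nat \<lceil>y\<rceil>"
    by (simp add: powr_realpow[symmetric])
  then show ?thesis by simp
qed

lemma grad_fnc:
  fixes x :: "real^'n" and i1 :: 'n
  assumes "x $ i1 \<noteq> 0"
  shows "grad (fnc i1 a) x = (\<chi> i. if i = i1 then a * sgn (x $ i1) else 1)"
    and "fnc i1 a differentiable (at x)"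
proof -
  define s where "s = sgn (x $ i1)"
  define g where "g = (\<lambda>y::real^'n. a * s * y $ i1 + (\<Sum>i\<in>UNIV - {i1}. y $ i))"
  define H where "H = {y::real^'n. 0 < s * y $ i1}"
  have "bounded_linear g"
    unfolding g_def
    by (intro bounded_linear_add bounded_linear_const_mult bounded_linear_sum bounded_linear_vec_nth)
  then have "(g has_derivative g) (at x)" by (rule bounded_linear_imp_has_derivative)
  moreover have "open H" unfolding H_def by (intro open_Collect_less continuous_intros)
  moreover have "x \<in> H" using assms by (auto simp: H_def s_def sgn_real_def)
  moreover have "g y = fnc i1 a y" if "y \<in> H" for y
  proof -
    have "\<bar>y $ i1\<bar> = s * y $ i1" using that
      by (auto simp: H_def s_def sgn_real_def split: if_splits)
    then show ?thesis by (simp add: g_def fnc_def)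
  qed
  ultimately have D: "(fnc i1 a has_derivative g) (at x)"
    by (rule has_derivative_transform_within_open)
  then show "fnc i1 a differentiable (at x)" unfolding differentiable_def by blast
  have "g (axis j 1) = (if j = i1 then a * sgn (x $ i1) else 1)" for j
  proof -
    have "(\<Sum>i\<in>UNIV - {i1}. axis j (1::real) $ i) = (if j = i1 then 0 else 1)"
      by (auto simp: axis_def if_distrib sum.delta cong: if_cong)
    then show ?thesis by (auto simp: g_def axis_def s_def)
  qed
  then show "grad (fnc i1 a) x = (\<chi> i. if i = i1 then a * sgn (x $ i1) else 1)"
    by (simp add: grad_def frechet_derivative_at[OF D, symmetric])
qed

lemma inner_two_valued_vec:
  fixes i1 :: "'n::finite"
  shows "(\<chi> i. if i = i1 then p else q) \<bullet> (\<chi> i. if i = i1 then r else s) =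
     p * r + (real CARD('n) - 1) * (q * s)"
proof -
  have "(\<chi> i. if i = i1 then p else q) \<bullet> (\<chi> i. if i = i1 then r else s) =
     (\<Sum>i\<in>UNIV. (if i = i1 then p * r else q * s))"
    unfolding inner_vec_def by (intro sum.cong) auto
  also have "\<dots> = p * r + (\<Sum>i\<in>UNIV - {i1}. q * s)"
    by (subst sum.remove[of _ i1]) (auto intro!: sum.cong)
  also have "\<dots> = p * r + (real CARD('n) - 1) * (q * s)"
    by (simp add: card_Diff_singleton of_nat_diff)
  finally show ?thesis .
qed

lemma armijo_fnc_descent_iff:
  fixes x :: "real^'n" and i1 :: 'n
  assumes "x $ i1 \<noteq> 0"
  defines "u \<equiv> \<bar>x $ i1\<bar>" and "n \<equiv> real CARD('n)"
  shows "armijo (fnc i1 a) c1 x (- grad (fnc i1 a) x) t \<longleftrightarrow>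
           a * \<bar>u - t * a\<bar> - t * (n - 1) \<le> a * u - c1 * t * (a\<^sup>2 + (n - 1))"
proof -
  define s where "s = sgn (x $ i1)"
  define d where "d = - grad (fnc i1 a) x"
  have s2: "s * s = 1" using assms(1) by (auto simp: s_def sgn_real_def)
  have G: "grad (fnc i1 a) x = (\<chi> i. if i = i1 then a * s else 1)"
    unfolding s_def by (rule grad_fnc(1)[OF assms(1)])
  have D: "d = (\<chi> i. if i = i1 then - (a * s) else - 1)"
    by (simp add: d_def G vec_eq_iff)
  have slope: "grad (fnc i1 a) x \<bullet> d = - (a\<^sup>2 + (n - 1))"
    unfolding D G inner_two_valued_vec n_def
    using s2 by (simp add: power2_eq_square algebra_simps)
  have "(x + t *\<^sub>R d) $ i1 = s * (u - t * a)"
    using assms(1) by (auto simp: D u_def s_def sgn_real_def algebra_simps)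
  then have first: "\<bar>(x + t *\<^sub>R d) $ i1\<bar> = \<bar>u - t * a\<bar>"
    using s2 by (auto simp: abs_mult s_def sgn_real_def split: if_splits)
  have "(\<Sum>i\<in>UNIV - {i1}. (x + t *\<^sub>R d) $ i) = (\<Sum>i\<in>UNIV - {i1}. x $ i - t)"
    by (intro sum.cong) (auto simp: D)
  also have "\<dots> = (\<Sum>i\<in>UNIV - {i1}. x $ i) - t * (n - 1)"
    by (simp add: sum_subtractf card_Diff_singleton n_def of_nat_diff algebra_simps)
  finally have rest: "(\<Sum>i\<in>UNIV - {i1}. (x + t *\<^sub>R d) $ i) = \<dots>" .
  have F1: "fnc i1 a (x + t *\<^sub>R d) = a * \<bar>u - t * a\<bar> + (\<Sum>i\<in>UNIV - {i1}. x $ i) - t * (n - 1)"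
    unfolding fnc_def first rest by simp
  have F0: "fnc i1 a x = a * u + (\<Sum>i\<in>UNIV - {i1}. x $ i)"
    by (simp add: fnc_def u_def)
  show ?thesis
    unfolding d_def[symmetric] armijo_def slope F1 F0 by (simp add: algebra_simps)
qed

lemma wolfe_fnc_descent_overshoot:
  fixes x :: "real^'n" and i1 :: 'n
  assumes "x $ i1 \<noteq> 0" and overshoot: "\<bar>x $ i1\<bar> < t * a"
    and "real CARD('n) - 1 \<le> a\<^sup>2" and "0 \<le> c2"
  shows "wolfe (fnc i1 a) c2 x (- grad (fnc i1 a) x) t"
proof -
  define s where "s = sgn (x $ i1)"
  define d where "d = - grad (fnc i1 a) x"
  define y where "y = x + t *\<^sub>R d"
  have s2: "s * s = 1" using assms(1) by (auto simp: s_def sgn_real_def)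
  have G: "grad (fnc i1 a) x = (\<chi> i. if i = i1 then a * s else 1)"
    unfolding s_def by (rule grad_fnc(1)[OF assms(1)])
  have D: "d = (\<chi> i. if i = i1 then - (a * s) else - 1)"
    by (simp add: d_def G vec_eq_iff)
  have y1: "y $ i1 = x $ i1 - t * a * s" by (simp add: y_def D)
  have "y $ i1 \<noteq> 0" and sy: "sgn (y $ i1) = - s"
    using overshoot assms(1) unfolding y1 s_def by (auto simp: sgn_real_def split: if_splits)
  then have G': "grad (fnc i1 a) y = (\<chi> i. if i = i1 then - (a * s) else 1)"
    by (simp add: grad_fnc(1) vec_eq_iff)
  have slope_y: "grad (fnc i1 a) y \<bullet> d = a\<^sup>2 - (real CARD('n) - 1)"
    unfolding G' D inner_two_valued_vec
    using s2 by (simp add: power2_eq_square algebra_simps)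
  have slope_x: "grad (fnc i1 a) x \<bullet> d = - (a\<^sup>2 + (real CARD('n) - 1))"
    unfolding D G inner_two_valued_vec
    using s2 by (simp add: power2_eq_square algebra_simps)
  have "c2 * (- (a\<^sup>2 + (real CARD('n) - 1))) \<le> 0"
  proof (intro mult_nonneg_nonpos)
    have "1 \<le> real CARD('n)" using finite_UNIV_card_ge_0[where 'a='n] by simp
    then show "- (a\<^sup>2 + (real CARD('n) - 1)) \<le> 0" using zero_le_power2[of a] by linarith
  qed (rule assms(4))
  then have "c2 * (grad (fnc i1 a) x \<bullet> d) \<le> grad (fnc i1 a) y \<bullet> d"
    unfolding slope_x slope_y using assms(3) by linarith
  then show ?thesis
    using grad_fnc(2)[OF \<open>y $ i1 \<noteq> 0\<close>]
    unfolding wolfe_def d_def[symmetric] y_def[symmetric] by blast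
qed

lemma armijo_fnc_descent_overshoot_iff:
  fixes x :: "real^'n" and i1 :: 'n
  assumes "x $ i1 \<noteq> 0" and overshoot: "\<bar>x $ i1\<bar> < t * a" and "0 < a"
    and \<tau>: "\<tau> = c1 + (real CARD('n) - 1) * (c1 - 1) / a\<^sup>2"
  shows "armijo (fnc i1 a) c1 x (- grad (fnc i1 a) x) t \<longleftrightarrow>
           t * ((1 + \<tau>) * a) \<le> 2 * \<bar>x $ i1\<bar>"
proof -
  define u where "u = \<bar>x $ i1\<bar>"
  define n where "n = real CARD('n)"
  have \<tau>_a2: "(1 + \<tau>) * a\<^sup>2 = a\<^sup>2 + c1 * a\<^sup>2 + (n - 1) * (c1 - 1)"
    using \<open>0 < a\<close> by (simp add: \<tau> n_def field_simps)
  have "\<bar>u - t * a\<bar> = t * a - u" using overshoot by (simp add: u_def)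
  then have "armijo (fnc i1 a) c1 x (- grad (fnc i1 a) x) t \<longleftrightarrow>
             a * (t * a - u) - t * (n - 1) \<le> a * u - c1 * t * (a\<^sup>2 + (n - 1))"
    using armijo_fnc_descent_iff[OF assms(1)]
    by (simp add: u_def n_def)
  also have "\<dots> \<longleftrightarrow> t * ((1 + \<tau>) * a\<^sup>2) \<le> 2 * a * u"
  proof -
    have "a * (t * a - u) - t * (n - 1) - (a * u - c1 * t * (a\<^sup>2 + (n - 1)))
          = t * ((1 + \<tau>) * a\<^sup>2) - 2 * a * u"
      unfolding \<tau>_a2 by (simp add: algebra_simps power2_eq_square)
    then show ?thesis by linarith
  qed
  also have "\<dots> \<longleftrightarrow> a * (t * ((1 + \<tau>) * a)) \<le> a * (2 * u)"
    by (simp add: algebra_simps power2_eq_square)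
  also have "\<dots> \<longleftrightarrow> t * ((1 + \<tau>) * a) \<le> 2 * u" using \<open>0 < a\<close> by simp
  finally show ?thesis by (simp add: u_def)
qed

lemma ls_fnc_step:
  fixes x :: "real^'n" and i1 :: 'n
  assumes "x $ i1 \<noteq> 0" and "\<bar>x $ i1\<bar> < a"
    and an: "real CARD('n) - 1 \<le> a\<^sup>2"
    and c: "0 < c1" "c1 < c2" "c2 < 1"
    and \<tau>: "\<tau> = c1 + (real CARD('n) - 1) * (c1 - 1) / a\<^sup>2" and "\<tau> \<le> 0"
  shows "ls_terminates (fnc i1 a) c1 c2 x (- grad (fnc i1 a) x) \<and>
     ls_step (fnc i1 a) c1 c2 x (- grad (fnc i1 a) x) =
       min 1 (1 / 2 powr (real_of_int \<lceil>log 2 ((1 + \<tau>) * a / \<bar>x $ i1\<bar>)\<rceil> - 1))"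
proof -
  define u where "u = \<bar>x $ i1\<bar>"
  define K where "K = (1 + \<tau>) * a"
  define R where "R = 2 * u / K"
  define N where "N = nat \<lceil>log 2 (1 / R)\<rceil>"
  have "0 < u" "u < a" using assms(1,2) by (auto simp: u_def)
  then have "0 < a" by simp
  have "a\<^sup>2 * (c1 - 1) \<le> (real CARD('n) - 1) * (c1 - 1)"
    using an c by (intro mult_right_mono_neg) auto
  then have "c1 - 1 \<le> (real CARD('n) - 1) * (c1 - 1) / a\<^sup>2"
    using \<open>0 < a\<close> by (simp add: pos_le_divide_eq mult.commute)
  then have "0 < K" "K \<le> a"
    using c \<open>\<tau> \<le> 0\<close> \<open>0 < a\<close> by (auto simp: K_def \<tau>)
  then have "0 < R" "u / a \<le> R / 2"
    using \<open>0 < u\<close> by (auto simp: R_def intro: divide_left_mono)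
  have armijo_iff: "armijo (fnc i1 a) c1 x (- grad (fnc i1 a) x) t \<longleftrightarrow> t \<le> R"
    if "u < t * a" for t
    using armijo_fnc_descent_overshoot_iff[OF assms(1) _ \<open>0 < a\<close> \<tau>] that \<open>0 < K\<close>
    by (simp add: u_def R_def K_def[symmetric] pos_le_divide_eq)
  have overshoot: "u < 1 / 2 ^ j * a" if "R / 2 < 1 / 2 ^ j" for j
  proof -
    have "u / a < 1 / 2 ^ j" using \<open>u / a \<le> R / 2\<close> that by linarith
    then show ?thesis using \<open>0 < a\<close> by (simp add: field_simps)
  qed
  have fail: "\<forall>j<N. \<not> armijo (fnc i1 a) c1 x (- grad (fnc i1 a) x) (1 / 2 ^ j)"
    using less_inverse_two_power_below_ceiling_log[OF \<open>0 < R\<close>] armijo_iff overshoot \<open>0 < R\<close>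
    by (fastforce simp: N_def)
  have N_overshoot: "u < 1 / 2 ^ N * a"
  proof (cases N)
    case (Suc m)
    then show ?thesis
      using less_inverse_two_power_below_ceiling_log[OF \<open>0 < R\<close>, of m] overshoot[of N]
      by (simp add: N_def)
  qed (use \<open>u < a\<close> in simp)
  have "1 / 2 ^ N \<le> R"
    using inverse_two_power_ceiling_log_le[OF \<open>0 < R\<close>] by (simp add: N_def)
  have "log 2 ((1 + \<tau>) * a / \<bar>x $ i1\<bar>) = log 2 (1 / R) + 1"
    using \<open>0 < u\<close> \<open>0 < K\<close> by (simp add: R_def K_def[symmetric] u_def[symmetric] log_divide log_mult)
  then have "real_of_int \<lceil>log 2 ((1 + \<tau>) * a / \<bar>x $ i1\<bar>)\<rceil> - 1 = real_of_int \<lceil>log 2 (1 / R)\<rceil>"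
    by simp
  then show ?thesis
    using ls_step_halving[OF fail] armijo_iff[OF N_overshoot] \<open>1 / 2 ^ N \<le> R\<close> N_overshoot
      wolfe_fnc_descent_overshoot[OF assms(1) _ an] c
    by (simp add: min_one_inverse_two_powr_ceiling N_def u_def)
qed

lemma ls_state_rational:
  "fst (ls_state f c1 c2 x d j) \<in> \<rat> \<and> snd (snd (ls_state f c1 c2 x d j)) \<in> \<rat> \<and>
   set_option (fst (snd (ls_state f c1 c2 x d j))) \<subseteq> \<rat>"
proof (induction j)
  case (Suc j)
  then show ?case
    by (cases "ls_state f c1 c2 x d j") (auto simp: Let_def split: option.splits)
qed simp

lemma ls_step_rational: "ls_step f c1 c2 x d \<in> \<rat>"
  unfolding ls_step_def ls_trial_def using ls_state_rational by blast

lemma gd_iter_fnc_notin_rational_multiples: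
  fixes x0 :: "real^'n" and i1 :: 'n
  assumes "x0 $ i1 \<notin> (*) a ` \<rat>"
  shows "gd_iter (fnc i1 a) c1 c2 x0 k $ i1 \<notin> (*) a ` \<rat>"
proof (induction k)
  case (Suc k)
  define xk where "xk = gd_iter (fnc i1 a) c1 c2 x0 k"
  define t where "t = ls_step (fnc i1 a) c1 c2 xk (- grad (fnc i1 a) xk)"
  have "xk $ i1 \<noteq> 0" using Suc by (auto simp: xk_def image_iff intro: bexI[of _ 0])
  then have "gd_iter (fnc i1 a) c1 c2 x0 (Suc k) $ i1 = xk $ i1 - a * (t * sgn (xk $ i1))"
    by (simp add: xk_def t_def Let_def grad_fnc(1) algebra_simps)
  moreover have "t * sgn (xk $ i1) \<in> \<rat>"
    using ls_step_rational[of "fnc i1 a"] by (simp add: t_def sgn_real_def)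
  moreover have "xk $ i1 - a * r \<notin> (*) a ` \<rat>" if "r \<in> \<rat>" for r
  proof
    assume "xk $ i1 - a * r \<in> (*) a ` \<rat>"
    then obtain r' where "r' \<in> \<rat>" "xk $ i1 = a * (r' + r)" by (auto simp: algebra_simps)
    then show False using Suc that by (auto simp: xk_def)
  qed
  ultimately show ?case by simp
qed (use assms in simp)

lemma AE_std_normal_vec_nth_notin_countable:
  fixes i :: "'n::finite"
  assumes "countable C"
  shows "AE x in std_normal_vec. x $ i \<notin> C"
proof -
  have "axis i (1::real) \<noteq> 0" by (simp add: vec_eq_iff axis_def)
  then have "negligible (\<Union>c\<in>C. {x::real^'n. axis i 1 \<bullet> x = c})"
    using assms by (auto intro!: negligible_countable_Union negligible_hyperplane)
  then have "AE x in lebesgue. (x::real^'n) $ i \<notin> C"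
    by (intro AE_I'[where N="\<Union>c\<in>C. {x. axis i 1 \<bullet> x = c}"])
      (auto simp: negligible_iff_null_sets inner_axis')
  then have "AE x in lborel. (x::real^'n) $ i \<notin> C"
    by (simp add: AE_completion_iff)
  then show ?thesis
    unfolding std_normal_vec_def by (subst AE_density) (auto elim: AE_mp)
qed

theorem theorem4:
  fixes a c1 c2 \<tau> :: real and i1 :: "'n::finite"
  assumes "CARD('n) \<ge> 2"
    and "a \<ge> sqrt (real CARD('n) - 1)"
    and "0 < c1" and "c1 < c2" and "c2 < 1"
    and "\<tau> = c1 + (real CARD('n) - 1) * (c1 - 1) / a\<^sup>2"
    and "\<tau> \<le> 0"
  shows "AE x0 in std_normal_vec. \<forall>k.
     \<bar>gd_iter (fnc i1 a) c1 c2 x0 k $ i1\<bar> < a \<longrightarrow>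
       (let xk = gd_iter (fnc i1 a) c1 c2 x0 k;
            q = \<lceil>log 2 ((1 + \<tau>) * a / \<bar>xk $ i1\<bar>)\<rceil>
        in ls_terminates (fnc i1 a) c1 c2 xk (- grad (fnc i1 a) xk) \<and>
           gd_step (fnc i1 a) c1 c2 x0 k = min 1 (1 / 2 powr (real_of_int q - 1)))"
proof -
  have "sqrt (real CARD('n) - 1) \<ge> 1" using assms(1) by simp
  then have "(sqrt (real CARD('n) - 1))\<^sup>2 \<le> a\<^sup>2"
    using assms(2) by (intro power_mono) auto
  then have an: "real CARD('n) - 1 \<le> a\<^sup>2" using assms(1) by simp
  have "AE x0 in std_normal_vec. x0 $ i1 \<notin> (*) a ` \<rat>"
    by (intro AE_std_normal_vec_nth_notin_countable countable_image countable_rat)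
  then show ?thesis
  proof (rule AE_mp, intro AE_I2 impI allI)
    fix x0 :: "real^'n" and k
    assume "x0 $ i1 \<notin> (*) a ` \<rat>" "\<bar>gd_iter (fnc i1 a) c1 c2 x0 k $ i1\<bar> < a"
    moreover from this(1) have "gd_iter (fnc i1 a) c1 c2 x0 k $ i1 \<noteq> 0"
      using gd_iter_fnc_notin_rational_multiples[of x0 i1 a c1 c2 k] by force
    ultimately show "let xk = gd_iter (fnc i1 a) c1 c2 x0 k;
            q = \<lceil>log 2 ((1 + \<tau>) * a / \<bar>xk $ i1\<bar>)\<rceil>
        in ls_terminates (fnc i1 a) c1 c2 xk (- grad (fnc i1 a) xk) \<and>
           gd_step (fnc i1 a) c1 c2 x0 k = min 1 (1 / 2 powr (real_of_int q - 1))"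
      using ls_fnc_step[OF _ _ an assms(3-7)] by (simp add: gd_step_def Let_def)
  qed
qed

end
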